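(* Let $\lambda\in[0,1]$. For every $\alpha$ with $1\le\alpha<\frac{2(1-\lambda)}{2\lambda+1}$, there exists an instance with the weighted single metric loss with parameter $\lambda$ in which no clustering is in the $\alpha$-core.
   Context: Instance: finite nonempty set $\mathcal{N}$ of $n$ agents, finite nonempty set $\mathcal{M}$ of feasible centers, positive integer $k$, pseudometric $d$ on $\mathcal{N}\cup\mathcal{M}$. Weighted single metric loss: $\ell_i(C,x)=\lambda\max_{j\in C}d(i,j)+(1-\lambda)d(i,x)$ for $i\in C\subseteq\mathcal{N}$, $x\in\mathcal{M}$. A clustering is $\mathcal{X}=\{(C_1,x_1),\dots,(C_k,x_k)\}$ with $C_t$ pairwise disjoint (some possibly empty), union $\mathcal{N}$, $x_t\in\mathcal{M}$; $\ell_i(\mathcal{X})=\ell_i(C_t,x_t)$ where $i\in C_t$. For $\alpha\ge1$, $\mathcal{X}$ is in the $\alpha$-core if there is no $S\subseteq\mathcal{N}$ with $|S|\ge n/k$ and $y\in\mathcal{M}$ with $\alpha\,\ell_i(S,y)<\ell_i(\mathcal{X})$ for all $i\in S$. *)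

theory Defs
  imports Complex_Main
begin

definition pseudometric_on :: "nat set \<Rightarrow> (nat \<Rightarrow> nat \<Rightarrow> real) \<Rightarrow> bool" where
  "pseudometric_on A d \<longleftrightarrow>
     (\<forall>a\<in>A. d a a = 0) \<and>
     (\<forall>a\<in>A. \<forall>b\<in>A. d a b \<ge> 0 \<and> d a b = d b a) \<and>
     (\<forall>a\<in>A. \<forall>b\<in>A. \<forall>c\<in>A. d a c \<le> d a b + d b c)"

definition wloss :: "real \<Rightarrow> (nat \<Rightarrow> nat \<Rightarrow> real) \<Rightarrow> nat set \<Rightarrow> nat \<Rightarrow> nat \<Rightarrow> real" where
  "wloss lam d C x i = lam * Max (d i ` C) + (1 - lam) * d i x"

text \<open>A clustering with k (possibly empty) clusters C 0, ..., C (k-1) and centers x 0, ..., x (k-1).\<close>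
definition is_clustering :: "nat set \<Rightarrow> nat set \<Rightarrow> nat \<Rightarrow> (nat \<Rightarrow> nat set) \<Rightarrow> (nat \<Rightarrow> nat) \<Rightarrow> bool" where
  "is_clustering N M k C x \<longleftrightarrow>
     (\<forall>t<k. x t \<in> M) \<and>
     (\<forall>s<k. \<forall>t<k. s \<noteq> t \<longrightarrow> C s \<inter> C t = {}) \<and>
     (\<Union>t<k. C t) = N"

definition in_alpha_core ::
  "real \<Rightarrow> (nat \<Rightarrow> nat \<Rightarrow> real) \<Rightarrow> nat set \<Rightarrow> nat set \<Rightarrow> nat \<Rightarrow> real
     \<Rightarrow> (nat \<Rightarrow> nat set) \<Rightarrow> (nat \<Rightarrow> nat) \<Rightarrow> bool" where
  "in_alpha_core lam d N M k \<alpha> C x \<longleftrightarrow>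
     \<not> (\<exists>S y. S \<subseteq> N \<and> real (card S) \<ge> real (card N) / real k \<and> y \<in> M \<and>
            (\<forall>i\<in>S. \<forall>t<k. i \<in> C t \<longrightarrow> \<alpha> * wloss lam d S y i < wloss lam d (C t) (x t) i))"

end

theory Submission imports Defs begin

text \<open>Take k = 3 and two far-apart copies of a gadget made of three agents a 0, a 1, a 2 at
  mutual distance 3 and three centers in cyclic position, a i being at distance 1, 2, 4 from
  c (i - 1), c i, c (i + 1). With six agents every pair is a large enough coalition. Three
  centers cannot occupy both gadgets twice, so some gadget hosts at most one center in use.
  If that center c j serves two agents of the gadget, the pair a j, a (j - 1) blocks with
  center c (j - 1): both agents keep the intra-pair distance 3 but move closer to their
  center (from 2 to 1, resp. from 4 to 2), which beats the factor alpha since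
  alpha (2 lam + 1) < 2 (1 - lam). Otherwise two agents of the gadget are served by
  far centers, and together with any center of the gadget they block.\<close>

lemma wloss_ge:
  assumes "finite C" "j \<in> C" "0 \<le> lam"
  shows "lam * d i j + (1 - lam) * d i x \<le> wloss lam d C x i"
proof -
  have "d i j \<le> Max (d i ` C)" using assms by auto
  then show ?thesis unfolding wloss_def using assms(3) by (simp add: mult_left_mono)
qed

lemma wloss_doubleton:
  assumes "d p p = 0" "0 \<le> d p q"
  shows "wloss lam d {p, q} y p = lam * d p q + (1 - lam) * d p y"
  unfolding wloss_def using assms by (simp add: max_def)

definition blocking ::
  "real \<Rightarrow> real \<Rightarrow> (nat \<Rightarrow> nat \<Rightarrow> real) \<Rightarrow> nat \<Rightarrow> (nat \<Rightarrow> nat set) \<Rightarrow> (nat \<Rightarrow> nat)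
     \<Rightarrow> nat set \<Rightarrow> nat \<Rightarrow> bool" where
  "blocking lam \<alpha> d k C x S y \<longleftrightarrow>
     (\<forall>i\<in>S. \<forall>t<k. i \<in> C t \<longrightarrow> \<alpha> * wloss lam d S y i < wloss lam d (C t) (x t) i)"

lemma blocking_not_in_alpha_core:
  assumes "S \<subseteq> N" "real (card N) / real k \<le> real (card S)" "y \<in> M"
    and "blocking lam \<alpha> d k C x S y"
  shows "\<not> in_alpha_core lam d N M k \<alpha> C x"
  using assms unfolding in_alpha_core_def blocking_def by blast

locale alpha_range =
  fixes lam \<alpha> :: real
  assumes lam_nonneg: "0 \<le> lam" and alpha_nonneg: "0 \<le> \<alpha>"
    and alpha_less: "\<alpha> * (2 * lam + 1) < 2 * (1 - lam)"
begin

lemma lam_less_1: "lam < 1"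
  using alpha_less alpha_nonneg lam_nonneg by (smt (verit) mult_nonneg_nonneg)

lemma alpha_gain_1_2: "\<alpha> * (3 * lam + (1 - lam) * 1) < 3 * lam + (1 - lam) * 2"
  using alpha_less lam_nonneg by (simp add: algebra_simps)

lemma alpha_gain_2_4: "\<alpha> * (3 * lam + (1 - lam) * 2) < 3 * lam + (1 - lam) * 4"
proof -
  have "\<alpha> * (lam + 2) \<le> \<alpha> * (2 * (2 * lam + 1))"
    using alpha_nonneg lam_nonneg by (intro mult_left_mono) auto
  then show ?thesis using alpha_less lam_nonneg by (simp add: algebra_simps)
qed

lemma alpha_gain_far:
  assumes "0 \<le> e" "e \<le> 4"
  shows "\<alpha> * (3 * lam + (1 - lam) * e) < (1 - lam) * 8"
proof -
  have "(1 - lam) * e \<le> (1 - lam) * 4"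
    using assms lam_less_1 by (intro mult_left_mono) auto
  then have "3 * lam + (1 - lam) * e \<le> 4 * (2 * lam + 1)"
    using lam_nonneg by (simp add: algebra_simps)
  then have "\<alpha> * (3 * lam + (1 - lam) * e) \<le> \<alpha> * (4 * (2 * lam + 1))"
    using alpha_nonneg by (rule mult_left_mono)
  then show ?thesis using alpha_less by linarith
qed

end

locale cyclic_gadget = alpha_range +
  fixes d :: "nat \<Rightarrow> nat \<Rightarrow> real" and M :: "nat set" and a c :: "nat \<Rightarrow> nat"
  assumes dist_agent_self: "i < 3 \<Longrightarrow> d (a i) (a i) = 0"
    and dist_agents: "i < 3 \<Longrightarrow> j < 3 \<Longrightarrow> i \<noteq> j \<Longrightarrow> d (a i) (a j) = 3"
    and dist_center_same: "i < 3 \<Longrightarrow> d (a i) (c i) = 2"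
    and dist_center_next: "i < 3 \<Longrightarrow> d (a i) (c ((i + 1) mod 3)) = 4"
    and dist_center_prev: "i < 3 \<Longrightarrow> d (a i) (c ((i + 2) mod 3)) = 1"
    and dist_far: "i < 3 \<Longrightarrow> z \<in> M \<Longrightarrow> z \<notin> c ` {..<3} \<Longrightarrow> 8 \<le> d (a i) z"
begin

lemma dist_center_bounds:
  assumes "i < 3" "j < 3"
  shows "0 \<le> d (a i) (c j) \<and> d (a i) (c j) \<le> 4"
proof -
  have "j = i \<or> j = (i + 1) mod 3 \<or> j = (i + 2) mod 3" using assms by presburger
  then show ?thesis
    using assms dist_center_same dist_center_next dist_center_prev by auto
qed

lemma wloss_pair:
  assumes "i < 3" "j < 3" "i \<noteq> j"
  shows "wloss lam d {a i, a j} y (a i) = 3 * lam + (1 - lam) * d (a i) y"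
  using wloss_doubleton[of d "a i" "a j"] assms dist_agent_self dist_agents by simp

text \<open>Only clusters served inside the gadget need checking: from a far center an agent
  loses at least 8 (1 - lam), more than alpha times any loss a gadget pair can cause.\<close>

lemma pair_blockingI:
  assumes ij: "i < 3" "j < 3" "i \<noteq> j" and y: "y \<in> c ` {..<3}"
    and centers: "\<forall>t<k. x t \<in> M" and fin: "\<forall>t<k. finite (C t)"
    and near: "\<And>m t. m \<in> {i, j} \<Longrightarrow> t < k \<Longrightarrow> a m \<in> C t \<Longrightarrow> x t \<in> c ` {..<3} \<Longrightarrow>
      \<alpha> * (3 * lam + (1 - lam) * d (a m) y) < wloss lam d (C t) (x t) (a m)"
  shows "blocking lam \<alpha> d k C x {a i, a j} y"
  unfolding blocking_def
proof (intro ballI allI impI)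
  fix p t assume "p \<in> {a i, a j}" "t < k" "p \<in> C t"
  then obtain m where m: "m \<in> {i, j}" "p = a m" "a m \<in> C t" by blast
  have pair: "wloss lam d {a i, a j} y (a m) = 3 * lam + (1 - lam) * d (a m) y"
    using m(1) ij wloss_pair[of i j y] wloss_pair[of j i y] by (auto simp: insert_commute)
  have "\<alpha> * (3 * lam + (1 - lam) * d (a m) y) < wloss lam d (C t) (x t) (a m)"
  proof (cases "x t \<in> c ` {..<3}")
    case True
    then show ?thesis using near m \<open>t < k\<close> by blast
  next
    case False
    have "m < 3" using m(1) ij by auto
    have "8 \<le> d (a m) (x t)" using dist_far False centers \<open>t < k\<close> \<open>m < 3\<close> by auto
    then have "(1 - lam) * 8 \<le> (1 - lam) * d (a m) (x t)"
      using lam_less_1 by (intro mult_left_mono) auto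
    moreover have "lam * d (a m) (a m) + (1 - lam) * d (a m) (x t) \<le> wloss lam d (C t) (x t) (a m)"
      using wloss_ge fin \<open>t < k\<close> m(3) lam_nonneg by blast
    moreover have "\<alpha> * (3 * lam + (1 - lam) * d (a m) y) < (1 - lam) * 8"
      using alpha_gain_far dist_center_bounds y \<open>m < 3\<close> by auto
    ultimately show ?thesis using dist_agent_self \<open>m < 3\<close> by simp
  qed
  then show "\<alpha> * wloss lam d {a i, a j} y p < wloss lam d (C t) (x t) p"
    using pair m(2) by simp
qed

lemma rotated_pair_blocking:
  assumes t0: "t0 < k" "j < 3" "x t0 = c j"
    and two: "i < 3" "i' < 3" "i \<noteq> i'" "a i \<in> C t0" "a i' \<in> C t0"
    and unique: "\<forall>t<k. \<forall>t'<k. x t \<in> c ` {..<3} \<longrightarrow> x t' \<in> c ` {..<3} \<longrightarrow> t = t'"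
    and centers: "\<forall>t<k. x t \<in> M" and fin: "\<forall>t<k. finite (C t)"
  shows "blocking lam \<alpha> d k C x {a j, a ((j + 2) mod 3)} (c ((j + 2) mod 3))"
proof (rule pair_blockingI[OF _ _ _ _ centers fin])
  show "j < 3" "(j + 2) mod 3 < 3" "j \<noteq> (j + 2) mod 3" using t0 by presburger+
  show "c ((j + 2) mod 3) \<in> c ` {..<3}" by simp
  fix m t assume m: "m \<in> {j, (j + 2) mod 3}" "t < k" "a m \<in> C t" "x t \<in> c ` {..<3}"
  have "m < 3" using m(1) t0 by auto
  have "t = t0" using unique m(2,4) t0 by auto
  obtain m' where m': "m' < 3" "m' \<noteq> m" "a m' \<in> C t0" using two by blast
  have "lam * d (a m) (a m') + (1 - lam) * d (a m) (x t0) \<le> wloss lam d (C t0) (x t0) (a m)"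
    using wloss_ge fin t0(1) m'(3) lam_nonneg by blast
  then have old: "3 * lam + (1 - lam) * d (a m) (c j) \<le> wloss lam d (C t) (x t) (a m)"
    using dist_agents[OF \<open>m < 3\<close> m'(1)] m'(2) t0(3) \<open>t = t0\<close> by simp
  show "\<alpha> * (3 * lam + (1 - lam) * d (a m) (c ((j + 2) mod 3))) < wloss lam d (C t) (x t) (a m)"
  proof (cases "m = j")
    case True
    then show ?thesis
      using old alpha_gain_1_2 dist_center_same dist_center_prev t0(2) by simp
  next
    case False
    then have "m = (j + 2) mod 3" "j = (m + 1) mod 3" using m(1) t0(2) by auto presburger
    then have "d (a m) (c ((j + 2) mod 3)) = 2" "d (a m) (c j) = 4"
      using dist_center_same dist_center_next \<open>m < 3\<close> by simp_all
    then show ?thesis using old alpha_gain_2_4 by simp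
  qed
qed

lemma far_pair_blocking:
  assumes ij: "i < 3" "j < 3" "i \<noteq> j"
    and far: "\<forall>t<k. a i \<in> C t \<longrightarrow> x t \<notin> c ` {..<3}" "\<forall>t<k. a j \<in> C t \<longrightarrow> x t \<notin> c ` {..<3}"
    and centers: "\<forall>t<k. x t \<in> M" and fin: "\<forall>t<k. finite (C t)"
  shows "blocking lam \<alpha> d k C x {a i, a j} (c 0)"
proof (rule pair_blockingI[OF ij _ centers fin])
  show "c 0 \<in> c ` {..<3}" by simp
  fix m t assume "m \<in> {i, j}" "t < k" "a m \<in> C t" "x t \<in> c ` {..<3}"
  with far have False by blast
  then show "\<alpha> * (3 * lam + (1 - lam) * d (a m) (c 0)) < wloss lam d (C t) (x t) (a m)" ..
qed

lemma blocking_pair_exists: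
  assumes unique: "\<forall>t<k. \<forall>t'<k. x t \<in> c ` {..<3} \<longrightarrow> x t' \<in> c ` {..<3} \<longrightarrow> t = t'"
    and centers: "\<forall>t<k. x t \<in> M" and fin: "\<forall>t<k. finite (C t)"
  obtains i j y where "i < 3" "j < 3" "i \<noteq> j" "y \<in> c ` {..<3}"
    and "blocking lam \<alpha> d k C x {a i, a j} y"
proof (cases "\<exists>t0<k. x t0 \<in> c ` {..<3} \<and> (\<exists>i<3. \<exists>i'<3. i \<noteq> i' \<and> a i \<in> C t0 \<and> a i' \<in> C t0)")
  case True
  then obtain t0 i i' where t0: "t0 < k" "x t0 \<in> c ` {..<3}"
    and two: "i < 3" "i' < 3" "i \<noteq> i'" "a i \<in> C t0" "a i' \<in> C t0" by blast
  from t0(2) obtain j where j: "j < 3" "x t0 = c j" by blast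
  have "(j + 2) mod 3 < 3" "j \<noteq> (j + 2) mod 3" using j(1) by presburger+
  moreover have "c ((j + 2) mod 3) \<in> c ` {..<3}" by simp
  ultimately show thesis
    using that[OF j(1)] rotated_pair_blocking[OF t0(1) j two unique centers fin] by blast
next
  case False
  define served_in_gadget where
    "served_in_gadget i \<longleftrightarrow> (\<exists>t<k. a i \<in> C t \<and> x t \<in> c ` {..<3})" for i
  have at_most_one: "\<not> served_in_gadget i \<or> \<not> served_in_gadget j"
    if ij: "i < 3" "j < 3" "i \<noteq> j" for i j
  proof (rule ccontr)
    assume "\<not> ?thesis"
    then obtain t t' where t: "t < k" "a i \<in> C t" "x t \<in> c ` {..<3}"
      and t': "t' < k" "a j \<in> C t'" "x t' \<in> c ` {..<3}"
      unfolding served_in_gadget_def by blast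
    have "t = t'" using unique[rule_format, OF t(1) t'(1) t(3) t'(3)] .
    then have "\<exists>i<3. \<exists>i'<3. i \<noteq> i' \<and> a i \<in> C t \<and> a i' \<in> C t"
      using ij t(2) t'(2) by blast
    with t(1,3) False show False by meson
  qed
  have far: "blocking lam \<alpha> d k C x {a i, a j} (c 0)"
    if "i < 3" "j < 3" "i \<noteq> j" "\<not> served_in_gadget i" "\<not> served_in_gadget j" for i j
    using far_pair_blocking[OF that(1-3) _ _ centers fin] that(4,5)
    unfolding served_in_gadget_def by blast
  have c0: "c 0 \<in> c ` {..<3}" by simp
  consider "\<not> served_in_gadget 0" "\<not> served_in_gadget 1"
    | "\<not> served_in_gadget 0" "\<not> served_in_gadget 2"
    | "\<not> served_in_gadget 1" "\<not> served_in_gadget 2"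
    using at_most_one[of 0 1] at_most_one[of 0 2] at_most_one[of 1 2] by force
  then show thesis
  proof cases
    case 1
    then show thesis using that[OF _ _ _ c0 far[of 0 1]] by simp
  next
    case 2
    then show thesis using that[OF _ _ _ c0 far[of 0 2]] by simp
  next
    case 3
    then show thesis using that[OF _ _ _ c0 far[of 1 2]] by simp
  qed
qed

end

text \<open>Points 0..5 are agents and 6..11 centers; p mod 6 div 3 is the gadget of p and p mod 3
  its position in that gadget.\<close>

definition cyclic_dist :: "nat \<Rightarrow> nat \<Rightarrow> real" where
  "cyclic_dist i j = (if j = i then 2 else if j = (i + 1) mod 3 then 4 else 1)"

definition example_dist :: "nat \<Rightarrow> nat \<Rightarrow> real" where
  "example_dist p q =
     (if p = q then 0
      else if p mod 6 div 3 \<noteq> q mod 6 div 3 then 8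
      else if (p < 6) = (q < 6) then 3
      else if p < 6 then cyclic_dist (p mod 3) (q mod 3)
      else cyclic_dist (q mod 3) (p mod 3))"

lemma pseudometric_example_dist: "pseudometric_on ({0..<6} \<union> {6..<12}) example_dist"
proof -
  have "{0..<6} \<union> {6..<12} = {0, 1, 2, 3, 4, 5, 6, 7, 8, 9, 10, 11 :: nat}" by auto
  then show ?thesis
    unfolding pseudometric_on_def by (simp add: example_dist_def cyclic_dist_def)
qed

lemma cyclic_gadget_example:
  assumes "alpha_range lam \<alpha>" "g < 2"
  shows "cyclic_gadget lam \<alpha> example_dist {6..<12} (\<lambda>i. 3 * g + i) (\<lambda>j. 6 + 3 * g + j)"
proof (intro cyclic_gadget.intro cyclic_gadget_axioms.intro assms(1))
  have g: "g = 0 \<or> g = 1" using assms(2) by auto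
  have idx: "i = 0 \<or> i = 1 \<or> i = 2" if "i < 3" for i :: nat using that by auto
  fix i j z :: nat
  show "example_dist (3 * g + i) (3 * g + i) = 0" by (simp add: example_dist_def)
  show "example_dist (3 * g + i) (3 * g + j) = 3" if "i < 3" "j < 3" "i \<noteq> j"
    using g idx[OF that(1)] idx[OF that(2)] that(3) by (auto simp: example_dist_def)
  show "example_dist (3 * g + i) (6 + 3 * g + i) = 2" if "i < 3"
    using g idx[OF that] by (auto simp: example_dist_def cyclic_dist_def)
  show "example_dist (3 * g + i) (6 + 3 * g + (i + 1) mod 3) = 4" if "i < 3"
    using g idx[OF that] by (auto simp: example_dist_def cyclic_dist_def)
  show "example_dist (3 * g + i) (6 + 3 * g + (i + 2) mod 3) = 1" if "i < 3"
    using g idx[OF that] by (auto simp: example_dist_def cyclic_dist_def)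
  show "8 \<le> example_dist (3 * g + i) z"
    if "i < 3" "z \<in> {6..<12}" "z \<notin> (\<lambda>j. 6 + 3 * g + j) ` {..<3}"
  proof -
    have "(\<lambda>j. 6 + 3 * g + j) ` {..<3} = {6 + 3 * g, 7 + 3 * g, 8 + 3 * g}"
      by (auto simp: lessThan_nat_numeral)
    moreover have "z \<in> {6, 7, 8, 9, 10, 11}" using that(2) by auto
    ultimately have "z mod 6 div 3 \<noteq> g" using g that(3) by auto
    moreover have "(3 * g + i) mod 6 div 3 = g" "3 * g + i \<noteq> z"
      using g idx[OF that(1)] that(2) by auto
    ultimately show ?thesis by (simp add: example_dist_def)
  qed
qed

lemma at_most_once_in_one_of_two:
  fixes f :: "nat \<Rightarrow> 'a" and A :: "nat \<Rightarrow> 'a set"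
  assumes "A 0 \<inter> A 1 = {}"
  shows "\<exists>g<2. \<forall>t<3. \<forall>t'<3. f t \<in> A g \<longrightarrow> f t' \<in> A g \<longrightarrow> t = t'"
proof (rule ccontr)
  assume "\<not> ?thesis"
  then have "\<exists>t<3. \<exists>t'<3. t \<noteq> t' \<and> f t \<in> A g \<and> f t' \<in> A g" if "g < 2" for g
    using that by blast
  from this[of 0] this[of 1] obtain t1 t2 t3 t4
    where "t1 < 3" "t2 < 3" "t3 < 3" "t4 < 3" "t1 \<noteq> t2" "t3 \<noteq> t4"
      and "f t1 \<in> A 0" "f t2 \<in> A 0" "f t3 \<in> A 1" "f t4 \<in> A 1"
    by auto
  moreover from this have "t1 \<noteq> t3" "t1 \<noteq> t4" "t2 \<noteq> t3" "t2 \<noteq> t4" using assms by auto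
  ultimately show False by arith
qed

lemma example_not_in_alpha_core:
  assumes "alpha_range lam \<alpha>" and clustering: "is_clustering {0..<6} {6..<12} 3 C x"
  shows "\<not> in_alpha_core lam example_dist {0..<6} {6..<12} 3 \<alpha> C x"
proof -
  let ?centers = "\<lambda>g. (\<lambda>j. 6 + 3 * g + j) ` {..<3::nat}"
  have centers: "\<forall>t<3. x t \<in> {6..<12}" and covered: "(\<Union>t<3. C t) = {0..<6}"
    using clustering unfolding is_clustering_def by blast+
  then have fin: "\<forall>t<3. finite (C t)"
    using finite_subset[OF UN_upper, of _ "{..<3}" C] by (metis finite_atLeastLessThan lessThan_iff)
  have "?centers 0 \<inter> ?centers 1 = {}" by auto
  then obtain g where "g < 2"
    and unique: "\<forall>t<3. \<forall>t'<3. x t \<in> ?centers g \<longrightarrow> x t' \<in> ?centers g \<longrightarrow> t = t'"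
    using at_most_once_in_one_of_two[of ?centers x] by blast
  interpret cyclic_gadget lam \<alpha> example_dist "{6..<12}" "\<lambda>i. 3 * g + i" "\<lambda>j. 6 + 3 * g + j"
    using cyclic_gadget_example[OF assms(1) \<open>g < 2\<close>] .
  obtain i j y where "i < 3" "j < 3" "i \<noteq> j" "y \<in> ?centers g"
    and "blocking lam \<alpha> example_dist 3 C x {3 * g + i, 3 * g + j} y"
    by (rule blocking_pair_exists[OF unique centers fin])
  moreover have "{3 * g + i, 3 * g + j} \<subseteq> {0..<6}" "y \<in> {6..<12}"
    using \<open>g < 2\<close> \<open>i < 3\<close> \<open>j < 3\<close> \<open>y \<in> ?centers g\<close> by auto
  moreover have "real (card {0..<6::nat}) / real (3::nat) \<le> real (card {3 * g + i, 3 * g + j})"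
    using \<open>i \<noteq> j\<close> by simp
  ultimately show ?thesis by (intro blocking_not_in_alpha_core)
qed

theorem mainTheorem10:
  fixes lam \<alpha> :: real
  assumes "0 \<le> lam" and "lam \<le> 1"
    and "1 \<le> \<alpha>" and "\<alpha> < 2 * (1 - lam) / (2 * lam + 1)"
  shows "\<exists>(N :: nat set) (M :: nat set) (k :: nat) (d :: nat \<Rightarrow> nat \<Rightarrow> real).
           finite N \<and> N \<noteq> {} \<and> finite M \<and> M \<noteq> {} \<and> 0 < k \<and>
           pseudometric_on (N \<union> M) d \<and>
           (\<forall>C x. is_clustering N M k C x \<longrightarrow> \<not> in_alpha_core lam d N M k \<alpha> C x)"
proof -
  have "\<alpha> * (2 * lam + 1) < 2 * (1 - lam)"
    using assms(1,4) by (simp add: pos_less_divide_eq)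
  then have "alpha_range lam \<alpha>"
    using assms(1,3) by unfold_locales simp_all
  then show ?thesis
    using pseudometric_example_dist example_not_in_alpha_core
    by (intro exI[of _ "{0..<6}"] exI[of _ "{6..<12}"] exI[of _ 3] exI[of _ example_dist]) simp
qed

end
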